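(* Let $\mathcal A$ and $\mathcal B$ be Banach algebras and $\varphi:\mathcal A\to\mathcal B$ a continuous homomorphism with dense range. Let $I$ be a closed ideal of $\mathcal A$ and $J$ a closed ideal of $\mathcal B$ with $\varphi(I)\subseteq J$. If $\mathcal A$ has a bounded approximate identity modulo $I$, then $\mathcal B$ has a bounded approximate identity modulo $J$.
   Context: A Banach algebra $\mathcal A$ has a bounded approximate identity modulo a closed ideal $I$ if there is a bounded net $(u_\alpha)$ in $\mathcal A$ with $\lim_\alpha u_\alpha a=\lim_\alpha au_\alpha=a$ for all $a\in\mathcal A\setminus I$. *)

theory Defs
  imports "HOL-Analysis.Analysis"
begin

definition closed_ideal :: "'a::real_normed_algebra set \<Rightarrow> bool" where
  "closed_ideal I \<longleftrightarrow> closed I \<and> subspace I \<and>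
     (\<forall>a\<in>I. \<forall>x. x * a \<in> I \<and> a * x \<in> I)"

text \<open>Bounded approximate identity modulo I. A net in the algebra is represented,
  as usual in Isabelle/HOL, by a proper filter on the algebra (the image filter of the net).\<close>
definition bai_modulo :: "'a::real_normed_algebra set \<Rightarrow> bool" where
  "bai_modulo I \<longleftrightarrow> (\<exists>F :: 'a filter. F \<noteq> bot \<and>
     (\<exists>C. \<forall>\<^sub>F u in F. norm u \<le> C) \<and>
     (\<forall>a. a \<notin> I \<longrightarrow> ((\<lambda>u. u * a) \<longlongrightarrow> a) F \<and> ((\<lambda>u. a * u) \<longlongrightarrow> a) F))"

end

theory Submission
  imports Defs
begin

text \<open>Push the approximate identity \<open>(u\<^sub>\<alpha>)\<close> of \<open>\<A>\<close> forward to \<open>(\<phi> u\<^sub>\<alpha>)\<close>, which is bounded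
  since \<open>\<phi>\<close> is. Because this net is bounded, the set of \<open>b\<close> with \<open>\<phi>(u\<^sub>\<alpha>) b \<rightarrow> b\<close> and
  \<open>b \<phi>(u\<^sub>\<alpha>) \<rightarrow> b\<close> is closed. It contains \<open>\<phi> a\<close> for every \<open>a \<notin> I\<close>, and these points are dense
  in the open set \<open>\<B> - J\<close> since \<open>\<phi>\<close> has dense range and maps \<open>I\<close> into \<open>J\<close>.\<close>

lemma closed_tendsto_set_if_eventually_lipschitz:
  fixes f :: "'i \<Rightarrow> 'a::metric_space \<Rightarrow> 'b::metric_space"
  assumes lipschitz: "\<forall>\<^sub>F i in F. \<forall>x y. dist (f i x) (f i y) \<le> L * dist x y"
    and cont: "\<And>x. isCont g x"
  shows "closed {x. ((\<lambda>i. f i x) \<longlongrightarrow> g x) F}" (is "closed ?S")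
proof -
  have "x \<in> ?S" if "x \<in> closure ?S" for x
  proof (simp, rule tendstoI)
    fix e :: real assume "e > 0"
    then obtain d where "d > 0" and d: "\<And>y. dist y x < d \<Longrightarrow> dist (g y) (g x) < e / 3"
      using cont[of x] unfolding continuous_at_eps_delta by (metis divide_pos_pos zero_less_numeral)
    define r where "r = min d (e / (3 * (\<bar>L\<bar> + 1)))"
    have "r > 0" using \<open>d > 0\<close> \<open>e > 0\<close> by (simp add: r_def)
    then obtain y where "y \<in> ?S" and "dist y x < r"
      using \<open>x \<in> closure ?S\<close> unfolding closure_approachable by blast
    have "L * dist x y \<le> \<bar>L\<bar> * r"
      using \<open>dist y x < r\<close> by (intro mult_mono) (auto simp: dist_commute)
    also have "\<dots> \<le> \<bar>L\<bar> * (e / (3 * (\<bar>L\<bar> + 1)))"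
      by (intro mult_left_mono) (auto simp: r_def)
    also have "\<dots> < e / 3"
      using \<open>e > 0\<close> by (simp add: field_simps)
    finally have lip_small: "L * dist x y < e / 3" .
    have g_close: "dist (g y) (g x) < e / 3"
      using d \<open>dist y x < r\<close> by (simp add: r_def)
    have "((\<lambda>i. f i y) \<longlongrightarrow> g y) F"
      using \<open>y \<in> ?S\<close> by simp
    then have "\<forall>\<^sub>F i in F. dist (f i y) (g y) < e / 3"
      by (rule tendstoD) (simp add: \<open>e > 0\<close>)
    then show "\<forall>\<^sub>F i in F. dist (f i x) (g x) < e"
      using lipschitz
    proof (eventually_elim)
      case (elim i)
      have "dist (f i x) (g x) \<le> dist (f i x) (f i y) + dist (f i y) (g y) + dist (g y) (g x)"
        by (metis add_right_mono dist_triangle order_trans)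
      moreover have "dist (f i x) (f i y) \<le> L * dist x y"
        using elim(2) by blast
      ultimately show ?case
        using elim(1) g_close lip_small by linarith
    qed
  qed
  then show ?thesis
    using closure_subset_eq by blast
qed

lemma closed_unit_set_if_eventually_bounded:
  fixes F :: "'a::real_normed_algebra filter"
  assumes bounded: "\<forall>\<^sub>F u in F. norm u \<le> B"
  shows "closed {a. ((\<lambda>u. u * a) \<longlongrightarrow> a) F \<and> ((\<lambda>u. a * u) \<longlongrightarrow> a) F}"
proof -
  have lipschitz_mult_left: "\<forall>\<^sub>F u in F. \<forall>x y. dist (u * x) (u * y) \<le> B * dist x y"
    using bounded
  proof eventually_elim
    case (elim u)
    have "norm (u * (x - y)) \<le> B * norm (x - y)" for x y
      using norm_mult_ineq[of u "x - y"] elim mult_right_mono[OF elim, of "norm (x - y)"]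
      by simp
    then show ?case
      by (simp add: dist_norm right_diff_distrib)
  qed
  have lipschitz_mult_right: "\<forall>\<^sub>F u in F. \<forall>x y. dist (x * u) (y * u) \<le> B * dist x y"
    using bounded
  proof eventually_elim
    case (elim u)
    have "norm ((x - y) * u) \<le> B * norm (x - y)" for x y
      using norm_mult_ineq[of "x - y" u] elim mult_right_mono[OF elim, of "norm (x - y)"]
      by (simp add: mult.commute)
    then show ?case
      by (simp add: dist_norm left_diff_distrib)
  qed
  show ?thesis
    unfolding Collect_conj_eq
    by (intro closed_Int
          closed_tendsto_set_if_eventually_lipschitz[OF lipschitz_mult_left continuous_ident]
          closed_tendsto_set_if_eventually_lipschitz[OF lipschitz_mult_right continuous_ident])
qed

lemma compl_subset_closure_image_compl:
  assumes "closure (range f) = UNIV" and "closed B" and "f ` A \<subseteq> B"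
  shows "- B \<subseteq> closure (f ` (- A))"
proof -
  have "- B \<subseteq> closure (- B \<inter> range f)"
    using open_Int_closure_subset[of "- B" "range f"] assms(1,2) by (simp add: open_Compl)
  also have "\<dots> \<subseteq> closure (f ` (- A))"
    using assms(3) by (intro closure_mono) blast
  finally show ?thesis .
qed

theorem corollary3p6:
  fixes \<phi> :: "'a::{real_normed_algebra,banach} \<Rightarrow> 'b::{real_normed_algebra,banach}"
    and I :: "'a set" and J :: "'b set"
  assumes "bounded_linear \<phi>"
    and "\<And>x y. \<phi> (x * y) = \<phi> x * \<phi> y"
    and "closure (range \<phi>) = UNIV"
    and "closed_ideal I" and "closed_ideal J"
    and "\<phi> ` I \<subseteq> J"
    and "bai_modulo I"
  shows "bai_modulo J"
proof -
  interpret \<phi>: bounded_linear \<phi> by fact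
  obtain F :: "'a filter" and C where "F \<noteq> bot" and F_bounded: "\<forall>\<^sub>F u in F. norm u \<le> C"
    and F_unit: "\<And>a. a \<notin> I \<Longrightarrow> ((\<lambda>u. u * a) \<longlongrightarrow> a) F \<and> ((\<lambda>u. a * u) \<longlongrightarrow> a) F"
    using \<open>bai_modulo I\<close> unfolding bai_modulo_def by blast
  obtain K where "K > 0" and K: "\<And>x. norm (\<phi> x) \<le> norm x * K"
    using \<phi>.pos_bounded by blast
  let ?G = "filtermap \<phi> F"
  define S where "S = {b. ((\<lambda>v. v * b) \<longlongrightarrow> b) ?G \<and> ((\<lambda>v. b * v) \<longlongrightarrow> b) ?G}"
  have G_bounded: "\<forall>\<^sub>F v in ?G. norm v \<le> C * K"
    using F_bounded unfolding eventually_filtermap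
    by eventually_elim (metis K \<open>K > 0\<close> mult_right_mono less_imp_le order_trans)
  have "\<phi> a \<in> S" if "a \<notin> I" for a
    using \<phi>.tendsto[OF conjunct1[OF F_unit[OF that]]] \<phi>.tendsto[OF conjunct2[OF F_unit[OF that]]]
    by (simp add: S_def filterlim_filtermap assms(2))
  then have "\<phi> ` (- I) \<subseteq> S"
    by blast
  moreover have "- J \<subseteq> closure (\<phi> ` (- I))"
    using \<open>closed_ideal J\<close> compl_subset_closure_image_compl[OF assms(3) _ \<open>\<phi> ` I \<subseteq> J\<close>]
    by (simp add: closed_ideal_def)
  ultimately have "- J \<subseteq> S"
    using closure_minimal closed_unit_set_if_eventually_bounded[OF G_bounded]
    unfolding S_def by blast
  then show ?thesis
    unfolding bai_modulo_def S_def using \<open>F \<noteq> bot\<close> G_bounded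
    by (intro exI[of _ ?G]) (auto simp: filtermap_bot_iff)
qed

end
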